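(* Let $A_S$ be a single-layer GCNN model with graph convolution filter $g(\mathbf{L})$, trained on a training set $S$ of $m$ samples using the SGD algorithm (as described in the context) for $T$ iterations, where the loss function $\ell$ and the activation function $\sigma$ are Lipschitz-continuous and smooth (in the sense of the context) and the loss takes values in $[0,M]$. Then for every $\delta\in(0,1)$, with probability at least $1-\delta$ over the random draw of $S$, $$\mathbf{E}_{\textsc{sgd}}\big[R(A_S)-R_{emp}(A_S)\big]\le \frac{1}{m}\,\mathcal{O}\big((\lambda_G^{\max})^{2T}\big)+\Big(\mathcal{O}\big((\lambda_G^{\max})^{2T}\big)+M\Big)\sqrt{\frac{\log\frac{1}{\delta}}{2m}},$$ where $\mathbf{E}_{\textsc{sgd}}$ is the expectation over the randomness of SGD.
   Context: Setting. $G$ is a graph on $N$ nodes with graph Laplacian $\mathbf{L}=\mathbf{D}-\mathbf{A}$ ($\mathbf{A}$ adjacency, $\mathbf{D}$ degree matrix). A graph filter is a matrix $g(\mathbf{L})\in\mathbb{R}^{N\times N}$ (a function of $\mathbf{L}$ or of a degree-normalized version of it); $\lambda_G^{\max}$ denotes the largest singular value of $g(\mathbf{L})$ (equal to its largest absolute eigenvalue when $g(\mathbf{L})$ is symmetric/normal). For a node $\mathbf{x}$ write $e_{\cdot j}=[g(\mathbf{L})]_{\mathbf{x}j}$ and $\mathcal{N}(\mathbf{x})=\{j: [g(\mathbf{L})]_{\mathbf{x}j}\neq 0\}$ (including $\mathbf{x}$); the ego-graph of $\mathbf{x}$ is the subgraph on $\mathcal{N}(\mathbf{x})$. Each node $j$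 carries a scalar feature $\mathbf{x}_j\in\mathbb{R}$, and the features are normalized so that, for every node $\mathbf{x}$, the vector of features on its ego-graph has Euclidean norm $1$. A single-layer GCNN with parameter $\bm{\theta}\in\mathbb{R}$ outputs at node $\mathbf{x}$: $f(\mathbf{x},\bm{\theta})=\sigma\big(\sum_{j\in\mathcal{N}(\mathbf{x})}e_{\cdot j}\mathbf{x}_j\bm{\theta}\big)$. Data. A sample is $\mathbf{z}=(\mathbf{x},y)$ (a node, i.e. its ego-graph, with a real label $y$), drawn i.i.d. from an unknown distribution $\mathcal{D}$; $S=\{\mathbf{z}_1,\dots,\mathbf{z}_m\}$ with $m\le N$. $A_S$ denotes the model $f(\cdot,\bm{\theta}_S)$ with $\bm{\theta}_S$ the parameter output by training on $S$. Risk $R(A_S)=\mathbf{E}_{\mathbf{z}\sim\mathcal{D}}[\ell(A_S,\mathbf{z})]$, empirical risk $R_{emp}(A_S)=\frac1m\sum_{j=1}^m\ell(A_S,\mathbf{z}_j)$, where $\ell(A_S,\mathbf{z})=\ell(f(\mathbf{x},\bm{\theta}_S),y)$. SGD. Starting from an initial $\bm{\theta}_{S,0}$, at step $t$ an index $i_t$ is chosen uniformly at random from $\{1,\dots,m\}$ and $\bm{\theta}_{S,t+1}=\bm{\theta}_{S,t}-\eta\nabla_{\bm{\theta}}\ell(f(\mathbf{x}_{i_t},\bm{\theta}_{S,t}),y_{i_t})$ with learning rate $\eta>0$; $\bm{\theta}_S=\bm{\theta}_{S,T}$. Regularity. Activation: $|\sigma'(u)|\le\alpha_\sigma$ and $|\sigma'(u)-\sigma'(v)|\le\nu_\sigma|u-v|$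 for all $u,v$. Loss: $|\ell(f,y)-\ell(f',y)|\le\alpha_\ell|f-f'|$ and $|\nabla_{\bm\theta}\ell(f(\cdot),y)-\nabla_{\bm\theta}\ell(f'(\cdot),y)|\le\nu_\ell|\nabla_{\bm\theta}f(\cdot)-\nabla_{\bm\theta}f'(\cdot)|$. The $\mathcal{O}(\cdot)$ terms hide factors depending only on $\eta,\alpha_\ell,\alpha_\sigma,\nu_\ell,\nu_\sigma,T$ (not on $m$). *)

theory Defs
  imports "HOL-Probability.Probability"
begin

text \<open>Nodes of the graph are 0,...,N-1. A graph filter g(L) is an N x N real matrix,
  represented as g :: nat => nat => real (entries outside {..<N} are irrelevant).
  Vectors of R^N are functions nat => real vanishing outside {..<N}.\<close>

type_synonym filter = "nat \<Rightarrow> nat \<Rightarrow> real"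

definition largest_singular_value :: "nat \<Rightarrow> filter \<Rightarrow> real" where
  "largest_singular_value N A =
     sqrt (Max {\<mu>. \<exists>v::nat \<Rightarrow> real. (\<forall>i\<ge>N. v i = 0) \<and> (\<exists>i<N. v i \<noteq> 0) \<and>
                 (\<forall>i<N. (\<Sum>k<N. (\<Sum>j<N. A j i * A j k) * v k) = \<mu> * v i)})"

definition ego_nodes :: "nat \<Rightarrow> filter \<Rightarrow> nat \<Rightarrow> nat set" where
  "ego_nodes N g x = {j. j < N \<and> g x j \<noteq> 0} \<union> {x}"

definition graph_conv :: "nat \<Rightarrow> filter \<Rightarrow> (nat \<Rightarrow> real) \<Rightarrow> nat \<Rightarrow> real" where
  "graph_conv N g feat x = (\<Sum>j\<in>ego_nodes N g x. g x j * feat j)"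

definition gcnn :: "nat \<Rightarrow> (real \<Rightarrow> real) \<Rightarrow> filter \<Rightarrow> (nat \<Rightarrow> real) \<Rightarrow> nat \<Rightarrow> real \<Rightarrow> real" where
  "gcnn N \<sigma> g feat x \<theta> = \<sigma> (graph_conv N g feat x * \<theta>)"

definition loss_grad ::
  "nat \<Rightarrow> (real \<Rightarrow> real \<Rightarrow> real) \<Rightarrow> (real \<Rightarrow> real) \<Rightarrow> filter \<Rightarrow> (nat \<Rightarrow> real)
     \<Rightarrow> nat \<times> real \<Rightarrow> real \<Rightarrow> real" where
  "loss_grad N l \<sigma> g feat z \<theta> = deriv (\<lambda>t. l (gcnn N \<sigma> g feat (fst z) t) (snd z)) \<theta>"

definition sgd_param ::
  "nat \<Rightarrow> (real \<Rightarrow> real \<Rightarrow> real) \<Rightarrow> (real \<Rightarrow> real) \<Rightarrow> filter \<Rightarrow> (nat \<Rightarrow> real)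
     \<Rightarrow> real \<Rightarrow> real \<Rightarrow> (nat \<Rightarrow> nat \<times> real) \<Rightarrow> nat list \<Rightarrow> real" where
  "sgd_param N l \<sigma> g feat \<eta> \<theta>0 S is =
     foldl (\<lambda>\<theta> i. \<theta> - \<eta> * loss_grad N l \<sigma> g feat (S i) \<theta>) \<theta>0 is"

definition risk ::
  "nat \<Rightarrow> (real \<Rightarrow> real \<Rightarrow> real) \<Rightarrow> (real \<Rightarrow> real) \<Rightarrow> filter \<Rightarrow> (nat \<Rightarrow> real)
     \<Rightarrow> (nat \<times> real) measure \<Rightarrow> real \<Rightarrow> real" where
  "risk N l \<sigma> g feat D \<theta> = (\<integral>z. l (gcnn N \<sigma> g feat (fst z) \<theta>) (snd z) \<partial>D)"

definition emp_risk ::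
  "nat \<Rightarrow> (real \<Rightarrow> real \<Rightarrow> real) \<Rightarrow> (real \<Rightarrow> real) \<Rightarrow> filter \<Rightarrow> (nat \<Rightarrow> real)
     \<Rightarrow> nat \<Rightarrow> (nat \<Rightarrow> nat \<times> real) \<Rightarrow> real \<Rightarrow> real" where
  "emp_risk N l \<sigma> g feat m S \<theta> =
     (\<Sum>i<m. l (gcnn N \<sigma> g feat (fst (S i)) \<theta>) (snd (S i))) / real m"

text \<open>Expectation over the SGD randomness: i_0,...,i_{T-1} i.i.d. uniform on {0..<m}.\<close>
definition sgd_expect :: "nat \<Rightarrow> nat \<Rightarrow> (nat list \<Rightarrow> real) \<Rightarrow> real" where
  "sgd_expect m T X = (\<Sum>is\<in>{is. set is \<subseteq> {..<m} \<and> length is = T}. X is) / real m ^ T"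

end

theory Submission
  imports Defs "Jordan_Normal_Form.Spectral_Radius"
begin

text \<open>Each row of \<open>g\<close> has Euclidean norm at most its largest singular value
  \<open>\<lambda>\<^sub>G\<close> (maximise the Rayleigh quotient of \<open>g\<^sup>T g\<close> on the unit sphere; the
  maximiser is an eigenvector). By Cauchy-Schwarz on the normalised ego-graph features, the
  graph convolution at every node is therefore bounded by \<open>\<lambda> = max 1 \<lambda>\<^sub>G\<close>, so the
  loss is \<open>K\<close>-Lipschitz in \<open>\<theta>\<close> with \<open>K = \<alpha>\<^sub>l \<alpha>\<^sub>\<sigma> \<lambda>\<close>, every SGD step moves \<open>\<theta>\<close> by
  at most \<open>\<eta> K\<close>, and \<open>\<bar>\<theta>\<^sub>T - \<theta>\<^sub>0\<bar> \<le> \<eta> T K\<close>.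

  Fix an index sequence of SGD. On the at most \<open>T\<close> samples it visits, replace \<open>\<theta>\<^sub>T\<close>
  by \<open>\<theta>\<^sub>0\<close>; this changes the generalisation gap by at most \<open>2 \<eta> T\<^sup>2 K\<^sup>2 / m\<close>, the
  \<open>O(\<lambda>\<^sup>2\<^sup>T) / m\<close> term. In the resulting sum every term is a centred loss of a sample
  that is independent of the parameter at which it is evaluated, so Hoeffding's lemma and
  Fubini bound its moment generating function by \<open>exp (r\<^sup>2 M\<^sup>2 m / 8)\<close>. Jensen's
  inequality carries the bound over to the average over SGD's index sequences, and a
  Chernoff bound gives the term \<open>M \<surd>(ln (1/\<delta>) / 2m)\<close>.\<close>

section \<open>Rows of a matrix and its largest singular value\<close>

definition gram_eigenvalues :: "nat \<Rightarrow> filter \<Rightarrow> real set" where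
  "gram_eigenvalues N A = {\<mu>. \<exists>v::nat \<Rightarrow> real. (\<forall>i\<ge>N. v i = 0) \<and> (\<exists>i<N. v i \<noteq> 0) \<and>
     (\<forall>i<N. (\<Sum>k<N. (\<Sum>j<N. A j i * A j k) * v k) = \<mu> * v i)}"

lemma largest_singular_value_eq_sqrt_Max:
  "largest_singular_value N A = sqrt (Max (gram_eigenvalues N A))"
  unfolding largest_singular_value_def gram_eigenvalues_def ..

lemma gram_eigenvalues_subset_spectrum:
  "gram_eigenvalues N A \<subseteq> spectrum (mat N N (\<lambda>(i, k). \<Sum>j<N. A j i * A j k))"
proof
  fix \<mu> assume "\<mu> \<in> gram_eigenvalues N A"
  then obtain v where nz: "\<exists>i<N. v i \<noteq> 0"
    and ev: "\<forall>i<N. (\<Sum>k<N. (\<Sum>j<N. A j i * A j k) * v k) = \<mu> * v i"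
    unfolding gram_eigenvalues_def by blast
  have "vec N v \<noteq> 0\<^sub>v N"
    using nz by (metis index_vec index_zero_vec(1))
  moreover have "mat N N (\<lambda>(i, k). \<Sum>j<N. A j i * A j k) *\<^sub>v vec N v = \<mu> \<cdot>\<^sub>v vec N v"
    using ev by (intro eq_vecI) (auto simp: mult_mat_vec_def scalar_prod_def atLeast0LessThan)
  ultimately show "\<mu> \<in> spectrum (mat N N (\<lambda>(i, k). \<Sum>j<N. A j i * A j k))"
    unfolding spectrum_def eigenvalue_def eigenvector_def
    by (intro CollectI exI[of _ "vec N v"]) simp
qed

lemma finite_gram_eigenvalues: "finite (gram_eigenvalues N A)"
  using card_finite_spectrum(1)[OF mat_carrier] gram_eigenvalues_subset_spectrum
  by (rule finite_subset[rotated])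

definition gram_form :: "nat \<Rightarrow> filter \<Rightarrow> (nat \<Rightarrow> real) \<Rightarrow> real" where
  "gram_form N A v = (\<Sum>j<N. (\<Sum>i<N. A j i * v i)\<^sup>2)"

lemma gram_form_nonneg: "0 \<le> gram_form N A v"
  unfolding gram_form_def by (intro sum_nonneg) auto

lemma gram_form_scale: "gram_form N A (\<lambda>i. c * v i) = c\<^sup>2 * gram_form N A v"
  unfolding gram_form_def
  by (simp add: mult.left_commute power_mult_distrib flip: sum_distrib_left)

lemma continuous_on_coordinate [continuous_intros]: "continuous_on S (\<lambda>v::nat \<Rightarrow> real. v i)"
  by (rule continuous_on_subset[OF continuous_on_product_coordinates]) simp

lemma compact_unit_sphere:
  "compact {v :: nat \<Rightarrow> real. (\<forall>i\<ge>N. v i = 0) \<and> (\<Sum>i<N. (v i)\<^sup>2) = 1}" (is "compact ?S")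
proof -
  define box :: "nat \<Rightarrow> real set" where "box i = (if i < N then {-1..1} else {0})" for i
  have "compact (PiE UNIV box)"
    using compactin_PiE[of "\<lambda>_. euclidean" UNIV box]
    by (auto simp: box_def euclidean_product_topology)
  moreover have "closed {v :: nat \<Rightarrow> real. (\<Sum>i<N. (v i)\<^sup>2) = 1}"
    by (intro closed_Collect_eq continuous_intros)
  moreover have "?S = PiE UNIV box \<inter> {v. (\<Sum>i<N. (v i)\<^sup>2) = 1}"
  proof -
    have "\<bar>v i\<bar> \<le> 1" if "(\<Sum>i<N. (v i)\<^sup>2) = 1" "i < N" for v :: "nat \<Rightarrow> real" and i
      using member_le_sum[of i "{..<N}" "\<lambda>i. (v i)\<^sup>2"] that by (simp add: abs_square_le_1)
    then show ?thesis
      by (auto simp: box_def PiE_iff abs_le_iff split: if_splits)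
  qed
  ultimately show ?thesis
    by (simp add: compact_Int_closed)
qed

lemma gram_form_max_on_unit_sphere:
  assumes "0 < N"
  obtains v where "\<forall>i\<ge>N. v i = 0" "(\<Sum>i<N. (v i)\<^sup>2) = 1"
    "\<And>w. \<forall>i\<ge>N. w i = 0 \<Longrightarrow> gram_form N A w \<le> gram_form N A v * (\<Sum>i<N. (w i)\<^sup>2)"
proof -
  let ?S = "{v :: nat \<Rightarrow> real. (\<forall>i\<ge>N. v i = 0) \<and> (\<Sum>i<N. (v i)\<^sup>2) = 1}"
  have "(\<Sum>i<N. (if i = 0 then 1 else 0 :: real)\<^sup>2) = (\<Sum>i<N. if i = 0 then 1 else 0)"
    by (rule sum.cong) auto
  also have "\<dots> = 1"
    using assms by simp
  finally have "(\<lambda>i. if i = 0 then 1 else 0) \<in> ?S"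
    using assms by simp
  then have nonempty: "?S \<noteq> {}"
    by (metis empty_iff)
  have "continuous_on ?S (gram_form N A)"
    unfolding gram_form_def by (intro continuous_intros)
  from continuous_attains_sup[OF compact_unit_sphere nonempty this]
  obtain v where v: "v \<in> ?S" and max: "\<And>u. u \<in> ?S \<Longrightarrow> gram_form N A u \<le> gram_form N A v"
    by blast
  have "gram_form N A w \<le> gram_form N A v * (\<Sum>i<N. (w i)\<^sup>2)" if w0: "\<forall>i\<ge>N. w i = 0" for w
  proof (cases "\<forall>i<N. w i = 0")
    case True
    then show ?thesis by (simp add: gram_form_def)
  next
    case False
    define s where "s = sqrt (\<Sum>i<N. (w i)\<^sup>2)"
    obtain i where "i < N" "w i \<noteq> 0"
      using False by blast
    then have "0 < (\<Sum>i<N. (w i)\<^sup>2)"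
      by (intro sum_pos2[of _ i]) auto
    then have s: "0 < s" "s\<^sup>2 = (\<Sum>i<N. (w i)\<^sup>2)"
      by (simp_all add: s_def)
    then have "(\<lambda>i. (1 / s) * w i) \<in> ?S"
      using w0 \<open>0 < (\<Sum>i<N. (w i)\<^sup>2)\<close>
      by (simp add: power_mult_distrib power_divide flip: sum_divide_distrib)
    from max[OF this] have "(1 / s)\<^sup>2 * gram_form N A w \<le> gram_form N A v"
      by (simp only: gram_form_scale)
    then show ?thesis
      using s \<open>0 < (\<Sum>i<N. (w i)\<^sup>2)\<close> by (simp add: power_divide divide_le_eq)
  qed
  with v that show ?thesis by blast
qed

lemma eq_0_if_quadratic_nonneg:
  fixes b p :: real
  assumes "\<And>t. 0 \<le> 2 * t * b + t\<^sup>2 * p"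
  shows "b = 0"
proof (rule ccontr)
  assume "b \<noteq> 0"
  define q where "q = \<bar>p\<bar> + 1"
  define t where "t = - b / q"
  have "q > 0" "p \<le> q"
    unfolding q_def by auto
  then have "t\<^sup>2 * p \<le> b\<^sup>2 / q"
    using mult_left_mono[of p q "t\<^sup>2"] by (simp add: t_def power2_eq_square)
  moreover have "2 * t * b = - 2 * (b\<^sup>2 / q)"
    by (simp add: t_def power2_eq_square)
  moreover have "0 < b\<^sup>2 / q"
    using \<open>b \<noteq> 0\<close> \<open>q > 0\<close> by simp
  ultimately show False
    using assms[of t] by linarith
qed

lemma sum_sq_add_coordinate:
  fixes v :: "nat \<Rightarrow> real"
  assumes i: "i < N"
  shows "(\<Sum>k<N. (v k + t * (if k = i then 1 else 0))\<^sup>2) = (\<Sum>k<N. (v k)\<^sup>2) + 2 * t * v i + t\<^sup>2"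
proof -
  have "(\<Sum>k<N. (v k + t * (if k = i then 1 else 0))\<^sup>2)
      = (v i + t)\<^sup>2 + (\<Sum>k\<in>{..<N} - {i}. (v k + t * (if k = i then 1 else 0))\<^sup>2)"
    using i by (subst sum.remove[of _ i]) auto
  also have "\<dots> = (v i + t)\<^sup>2 + (\<Sum>k\<in>{..<N} - {i}. (v k)\<^sup>2)"
    by (auto intro!: sum.cong)
  also have "(\<Sum>k\<in>{..<N} - {i}. (v k)\<^sup>2) = (\<Sum>k<N. (v k)\<^sup>2) - (v i)\<^sup>2"
    using i by (subst sum_diff1) auto
  finally show ?thesis
    by (simp add: power2_sum mult_ac)
qed

lemma gram_form_maximizer_stationary:
  assumes v0: "\<forall>i\<ge>N. v i = 0" and v1: "(\<Sum>i<N. (v i)\<^sup>2) = 1"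
    and max: "\<And>w. \<forall>i\<ge>N. w i = 0 \<Longrightarrow> gram_form N A w \<le> gram_form N A v * (\<Sum>i<N. (w i)\<^sup>2)"
    and i: "i < N"
  shows "(\<Sum>j<N. (\<Sum>k<N. A j k * v k) * A j i) = gram_form N A v * v i"
proof -
  define \<mu> where "\<mu> = gram_form N A v"
  define a where "a j = (\<Sum>k<N. A j k * v k)" for j
  \<comment> \<open>the maximiser \<open>v\<close> cannot be improved along the direction \<open>e\<^sub>i\<close>\<close>
  have "\<mu> * v i - (\<Sum>j<N. a j * A j i) = 0"
  proof (rule eq_0_if_quadratic_nonneg)
    fix t :: real
    define w where "w k = v k + t * (if k = i then 1 else 0)" for k
    have Aw: "(\<Sum>k<N. A j k * w k) = a j + t * A j i" for j
      unfolding w_def distrib_left sum.distrib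
      using i by (simp add: a_def if_distrib mult.commute cong: if_cong)
    have "gram_form N A w = \<mu> + 2 * t * (\<Sum>j<N. a j * A j i) + t\<^sup>2 * (\<Sum>j<N. (A j i)\<^sup>2)"
      unfolding gram_form_def Aw \<mu>_def a_def
      by (simp add: power2_sum power_mult_distrib sum.distrib sum_distrib_left mult_ac)
    moreover have "(\<Sum>k<N. (w k)\<^sup>2) = 1 + 2 * t * v i + t\<^sup>2"
      using sum_sq_add_coordinate[OF i] v1 by (simp add: w_def)
    moreover have "\<forall>k\<ge>N. w k = 0"
      using v0 i by (simp add: w_def)
    ultimately have "\<mu> + 2 * t * (\<Sum>j<N. a j * A j i) + t\<^sup>2 * (\<Sum>j<N. (A j i)\<^sup>2)
        \<le> \<mu> * (1 + 2 * t * v i + t\<^sup>2)"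
      using max[of w] by (simp add: \<mu>_def)
    then show "0 \<le> 2 * t * (\<mu> * v i - (\<Sum>j<N. a j * A j i)) + t\<^sup>2 * (\<mu> - (\<Sum>j<N. (A j i)\<^sup>2))"
      by (simp add: algebra_simps)
  qed
  then show ?thesis
    by (simp add: \<mu>_def a_def)
qed

lemma gram_form_maximizer_mem_gram_eigenvalues:
  assumes v0: "\<forall>i\<ge>N. v i = 0" and v1: "(\<Sum>i<N. (v i)\<^sup>2) = 1"
    and max: "\<And>w. \<forall>i\<ge>N. w i = 0 \<Longrightarrow> gram_form N A w \<le> gram_form N A v * (\<Sum>i<N. (w i)\<^sup>2)"
  shows "gram_form N A v \<in> gram_eigenvalues N A"
proof -
  have "(\<Sum>k<N. (\<Sum>j<N. A j i * A j k) * v k) = gram_form N A v * v i" if "i < N" for i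
  proof -
    have "(\<Sum>k<N. (\<Sum>j<N. A j i * A j k) * v k) = (\<Sum>k<N. \<Sum>j<N. A j i * (A j k * v k))"
      by (simp add: sum_distrib_right mult.assoc)
    also have "\<dots> = (\<Sum>j<N. \<Sum>k<N. A j i * (A j k * v k))"
      by (rule sum.swap)
    also have "\<dots> = (\<Sum>j<N. (\<Sum>k<N. A j k * v k) * A j i)"
      by (simp add: sum_distrib_left mult_ac)
    also have "\<dots> = gram_form N A v * v i"
      using gram_form_maximizer_stationary[OF v0 v1 max that] .
    finally show ?thesis .
  qed
  moreover have "\<exists>i<N. v i \<noteq> 0"
  proof (rule ccontr)
    assume "\<not> (\<exists>i<N. v i \<noteq> 0)"
    then have "(\<Sum>i<N. (v i)\<^sup>2) = 0"
      by simp
    with v1 show False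
      by simp
  qed
  ultimately show ?thesis
    unfolding gram_eigenvalues_def using v0 by blast
qed

lemma row_norm_le_largest_singular_value:
  assumes x: "x < N"
  shows "sqrt (\<Sum>j<N. (A x j)\<^sup>2) \<le> largest_singular_value N A"
proof -
  obtain v where v0: "\<forall>i\<ge>N. v i = 0" and v1: "(\<Sum>i<N. (v i)\<^sup>2) = 1"
    and max: "\<And>w. \<forall>i\<ge>N. w i = 0 \<Longrightarrow> gram_form N A w \<le> gram_form N A v * (\<Sum>i<N. (w i)\<^sup>2)"
    using gram_form_max_on_unit_sphere[of N A] x by auto
  define r where "r = (\<Sum>j<N. (A x j)\<^sup>2)"
  define row where "row j = (if j < N then A x j else 0)" for j
  have "r\<^sup>2 = (\<Sum>j<N. A x j * row j)\<^sup>2"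
    by (simp add: r_def row_def power2_eq_square)
  also have "\<dots> \<le> gram_form N A row"
    unfolding gram_form_def using x
    by (intro member_le_sum[where f = "\<lambda>i. (\<Sum>j<N. A i j * row j)\<^sup>2"]) auto
  also have "\<dots> \<le> gram_form N A v * r"
    using max[of row] by (simp add: row_def r_def)
  finally have "r * r \<le> gram_form N A v * r"
    by (simp add: power2_eq_square)
  moreover have "0 \<le> r"
    unfolding r_def by (intro sum_nonneg) auto
  ultimately have "r \<le> gram_form N A v"
    using gram_form_nonneg[of N A v] mult_right_le_imp_le[of r "gram_form N A v" r]
    by (cases "r = 0") auto
  also have "\<dots> \<le> Max (gram_eigenvalues N A)"
    using gram_form_maximizer_mem_gram_eigenvalues[OF v0 v1 max] finite_gram_eigenvalues by simp
  finally show ?thesis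
    unfolding largest_singular_value_eq_sqrt_Max r_def by simp
qed

section \<open>Derivatives and Lipschitz bounds of real functions\<close>

lemma abs_deriv_le_if_lipschitz:
  fixes f :: "real \<Rightarrow> real"
  assumes "f differentiable (at x)" and lipschitz: "\<And>a b. \<bar>f a - f b\<bar> \<le> K * \<bar>a - b\<bar>"
  shows "\<bar>deriv f x\<bar> \<le> K"
proof -
  have "((\<lambda>h. (f (x + h) - f x) / h) \<longlongrightarrow> deriv f x) (at 0)"
    using assms(1) by (simp add: DERIV_def flip: DERIV_deriv_iff_real_differentiable)
  then have "((\<lambda>h. \<bar>(f (x + h) - f x) / h\<bar>) \<longlongrightarrow> \<bar>deriv f x\<bar>) (at 0)"
    by (rule tendsto_rabs)
  moreover have "\<bar>(f (x + h) - f x) / h\<bar> \<le> K" if "h \<noteq> 0" for h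
    using lipschitz[of "x + h" x] that by (simp add: abs_divide divide_le_eq)
  then have "\<forall>\<^sub>F h in at 0. \<bar>(f (x + h) - f x) / h\<bar> \<le> K"
    by (simp add: eventually_at_filter)
  ultimately show ?thesis
    by (rule tendsto_upperbound) simp
qed

lemma lipschitz_if_abs_deriv_le:
  fixes f :: "real \<Rightarrow> real"
  assumes "\<And>u. f differentiable (at u)" and "\<And>u. \<bar>deriv f u\<bar> \<le> B"
  shows "\<bar>f a - f b\<bar> \<le> B * \<bar>a - b\<bar>"
  using field_differentiable_bound[of UNIV f "deriv f" B a b] assms
  by (simp add: DERIV_deriv_iff_real_differentiable)

lemma borel_measurable_deriv:
  fixes F :: "'a \<Rightarrow> real \<Rightarrow> real"
  assumes differentiable: "\<And>\<omega>. F \<omega> differentiable (at (\<Theta> \<omega>))"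
    and measurable: "\<And>h. (\<lambda>\<omega>. F \<omega> (\<Theta> \<omega> + h)) \<in> borel_measurable M"
  shows "(\<lambda>\<omega>. deriv (F \<omega>) (\<Theta> \<omega>)) \<in> borel_measurable M"
proof (rule borel_measurable_LIMSEQ_real)
  fix \<omega>
  have "((\<lambda>h. (F \<omega> (\<Theta> \<omega> + h) - F \<omega> (\<Theta> \<omega>)) / h) \<longlongrightarrow> deriv (F \<omega>) (\<Theta> \<omega>)) (at 0)"
    using differentiable by (simp add: DERIV_def flip: DERIV_deriv_iff_real_differentiable)
  moreover have "filterlim (\<lambda>k. 1 / real (Suc k)) (at 0) sequentially"
  proof (rule tendsto_imp_filterlim_at_right[THEN filterlim_mono])
    show "(\<lambda>k. 1 / real (Suc k)) \<longlonglongrightarrow> 0"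
      using LIMSEQ_inverse_real_of_nat by (simp add: inverse_eq_divide)
  qed (simp_all add: at_within_le_at)
  ultimately show "(\<lambda>k. (F \<omega> (\<Theta> \<omega> + 1 / real (Suc k)) - F \<omega> (\<Theta> \<omega>)) * real (Suc k))
      \<longlonglongrightarrow> deriv (F \<omega>) (\<Theta> \<omega>)"
    using filterlim_compose by (fastforce simp: o_def)
next
  fix k
  have "(\<lambda>\<omega>. F \<omega> (\<Theta> \<omega>)) \<in> borel_measurable M"
    using measurable[of 0] by simp
  then show "(\<lambda>\<omega>. (F \<omega> (\<Theta> \<omega> + 1 / real (Suc k)) - F \<omega> (\<Theta> \<omega>)) * real (Suc k)) \<in> borel_measurable M"
    using measurable[of "1 / real (Suc k)"]
    by (intro borel_measurable_times borel_measurable_diff) auto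
qed

section \<open>Exponential moments and a Chernoff bound for averages\<close>

text \<open>The terms indexed by \<open>J\<close> may depend on the coordinates in \<open>I\<close>. Integrating out the
  \<open>J\<close>-coordinates first (Fubini along \<^const>\<open>merge\<close>) bounds them uniformly in the
  \<open>I\<close>-coordinates.\<close>

lemma nn_integral_exp_sum_adapted_le:
  fixes u :: "'a \<Rightarrow> real" and v :: "('i \<Rightarrow> 'a) \<Rightarrow> 'a \<Rightarrow> real"
  assumes D: "prob_space D" and IJ: "finite I" "finite J" "I \<inter> J = {}"
    and u: "u \<in> borel_measurable D" "(\<integral>\<^sup>+z. ennreal (exp (u z)) \<partial>D) \<le> e"
    and v: "\<And>x. x \<in> space (PiM I (\<lambda>_. D)) \<Longrightarrow> v x \<in> borel_measurable D"
      "\<And>x. x \<in> space (PiM I (\<lambda>_. D)) \<Longrightarrow> (\<integral>\<^sup>+z. ennreal (exp (v x z)) \<partial>D) \<le> e"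
    and measurable: "(\<lambda>S. (\<Sum>k\<in>I. u (S k)) + (\<Sum>k\<in>J. v (restrict S I) (S k)))
      \<in> borel_measurable (PiM (I \<union> J) (\<lambda>_. D))"
  shows "(\<integral>\<^sup>+S. ennreal (exp ((\<Sum>k\<in>I. u (S k)) + (\<Sum>k\<in>J. v (restrict S I) (S k))))
      \<partial>PiM (I \<union> J) (\<lambda>_. D)) \<le> e ^ (card I + card J)"
proof -
  interpret D: prob_space D by (rule D)
  interpret product_prob_space "\<lambda>_::'i. D"
    by unfold_locales
  define F where "F S = ennreal (exp ((\<Sum>k\<in>I. u (S k)) + (\<Sum>k\<in>J. v (restrict S I) (S k))))" for S
  have "F \<in> borel_measurable (PiM (I \<union> J) (\<lambda>_. D))"
    unfolding F_def using measurable by measurable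
  then have "(\<integral>\<^sup>+S. F S \<partial>PiM (I \<union> J) (\<lambda>_. D))
      = (\<integral>\<^sup>+x. \<integral>\<^sup>+y. F (merge I J (x, y)) \<partial>PiM J (\<lambda>_. D) \<partial>PiM I (\<lambda>_. D))"
    by (rule product_nn_integral_fold[OF IJ(3,1,2)])
  also have "\<dots> \<le> (\<integral>\<^sup>+x. (\<Prod>k\<in>I. ennreal (exp (u (x k)))) * e ^ card J \<partial>PiM I (\<lambda>_. D))"
  proof (rule nn_integral_mono)
    fix x assume x: "x \<in> space (PiM I (\<lambda>_. D))"
    then have "restrict x I = x"
      by (simp add: space_PiM PiE_def extensional_restrict)
    then have "F (merge I J (x, y))
        = (\<Prod>k\<in>I. ennreal (exp (u (x k)))) * (\<Prod>k\<in>J. ennreal (exp (v x (y k))))" for y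
      using IJ by (simp add: F_def exp_add exp_sum ennreal_mult prod_ennreal prod_nonneg)
    then have "(\<integral>\<^sup>+y. F (merge I J (x, y)) \<partial>PiM J (\<lambda>_. D))
        = (\<Prod>k\<in>I. ennreal (exp (u (x k))))
          * (\<integral>\<^sup>+y. (\<Prod>k\<in>J. ennreal (exp (v x (y k)))) \<partial>PiM J (\<lambda>_. D))"
      using v(1)[OF x] by (simp add: nn_integral_cmult)
    also have "(\<integral>\<^sup>+y. (\<Prod>k\<in>J. ennreal (exp (v x (y k)))) \<partial>PiM J (\<lambda>_. D))
        = (\<integral>\<^sup>+z. ennreal (exp (v x z)) \<partial>D) ^ card J"
      using product_nn_integral_prod[OF IJ(2), of "\<lambda>_ z. ennreal (exp (v x z))"] v(1)[OF x] by simp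
    also have "\<dots> \<le> e ^ card J"
      using v(2)[OF x] by (rule power_mono) simp
    finally show "(\<integral>\<^sup>+y. F (merge I J (x, y)) \<partial>PiM J (\<lambda>_. D))
        \<le> (\<Prod>k\<in>I. ennreal (exp (u (x k)))) * e ^ card J"
      by (simp add: mult_left_mono)
  qed
  also have "\<dots> = (\<integral>\<^sup>+z. ennreal (exp (u z)) \<partial>D) ^ card I * e ^ card J"
    using product_nn_integral_prod[OF IJ(1), of "\<lambda>_ z. ennreal (exp (u z))"] u(1)
    by (simp add: nn_integral_multc)
  also have "\<dots> \<le> e ^ card I * e ^ card J"
    using u(2) by (intro mult_right_mono power_mono) simp_all
  finally show ?thesis
    by (simp add: F_def power_add)
qed

lemma nn_integral_exp_mean_le:
  fixes X :: "'i \<Rightarrow> 'a \<Rightarrow> real"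
  assumes A: "finite A" "A \<noteq> {}" and "0 \<le> s"
    and X: "\<And>a. a \<in> A \<Longrightarrow> X a \<in> borel_measurable P"
    and mgf: "\<And>a. a \<in> A \<Longrightarrow> (\<integral>\<^sup>+x. ennreal (exp (s * X a x)) \<partial>P) \<le> E"
  shows "(\<integral>\<^sup>+x. ennreal (exp (s * ((\<Sum>a\<in>A. X a x) / card A))) \<partial>P) \<le> E"
proof -
  define w :: real where "w = 1 / card A"
  have w: "0 < w"
    using A by (simp add: w_def card_gt_0_iff)
  then have sum_w: "(\<Sum>a\<in>A. ennreal w) = 1"
    using A by (subst sum_ennreal) (auto simp: w_def)
  have "(\<integral>\<^sup>+x. ennreal (exp (s * ((\<Sum>a\<in>A. X a x) / card A))) \<partial>P)
      \<le> (\<integral>\<^sup>+x. (\<Sum>a\<in>A. ennreal w * ennreal (exp (s * X a x))) \<partial>P)"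
  proof (rule nn_integral_mono)
    fix x
    have "exp (s * (\<Sum>a\<in>A. w *\<^sub>R X a x)) \<le> (\<Sum>a\<in>A. w * exp (s * X a x))"
      using w \<open>0 \<le> s\<close> A by (intro convex_on_sum[OF A convex_on_exp]) (auto simp: w_def)
    moreover have "(\<Sum>a\<in>A. X a x) / card A = (\<Sum>a\<in>A. w *\<^sub>R X a x)"
      by (simp add: w_def sum_divide_distrib)
    ultimately have "ennreal (exp (s * ((\<Sum>a\<in>A. X a x) / card A)))
        \<le> ennreal (\<Sum>a\<in>A. w * exp (s * X a x))"
      by (intro ennreal_leI) simp
    also have "\<dots> = (\<Sum>a\<in>A. ennreal w * ennreal (exp (s * X a x)))"
      using w by (simp add: sum_ennreal ennreal_mult flip: sum_ennreal)
    finally show "ennreal (exp (s * ((\<Sum>a\<in>A. X a x) / card A)))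
        \<le> (\<Sum>a\<in>A. ennreal w * ennreal (exp (s * X a x)))" .
  qed
  also have "\<dots> = (\<Sum>a\<in>A. ennreal w * (\<integral>\<^sup>+x. ennreal (exp (s * X a x)) \<partial>P))"
    using X by (simp add: nn_integral_sum nn_integral_cmult)
  also have "\<dots> \<le> (\<Sum>a\<in>A. ennreal w * E)"
    using mgf by (intro sum_mono mult_left_mono) auto
  also have "\<dots> = (\<Sum>a\<in>A. ennreal w) * E"
    by (simp only: sum_distrib_right)
  finally show ?thesis
    using sum_w by simp
qed

lemma prob_average_ge_le:
  fixes X :: "'i \<Rightarrow> 'a \<Rightarrow> real"
  assumes P: "prob_space P" and A: "finite A" "A \<noteq> {}" and "0 < c" "0 < \<epsilon>"
    and X: "\<And>a. a \<in> A \<Longrightarrow> X a \<in> borel_measurable P"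
    and mgf: "\<And>a r. a \<in> A \<Longrightarrow> 0 < r \<Longrightarrow>
      (\<integral>\<^sup>+x. ennreal (exp (r * X a x)) \<partial>P) \<le> ennreal (exp (r\<^sup>2 * c))"
  shows "measure P {x \<in> space P. \<epsilon> \<le> (\<Sum>a\<in>A. X a x) / card A} \<le> exp (- \<epsilon>\<^sup>2 / (4 * c))"
proof -
  interpret prob_space P by (rule P)
  define s where "s = \<epsilon> / (2 * c)"
  have s: "0 < s"
    using assms by (simp add: s_def)
  have [measurable]: "(\<lambda>x. (\<Sum>a\<in>A. X a x) / card A) \<in> borel_measurable P"
    using X by measurable
  have "emeasure P {x \<in> space P. \<epsilon> \<le> (\<Sum>a\<in>A. X a x) / card A}
      \<le> ennreal (exp (- s * \<epsilon>))
        * (\<integral>\<^sup>+x. ennreal (exp (s * ((\<Sum>a\<in>A. X a x) / card A))) * indicator (space P) x \<partial>P)"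
    using s by (intro Chernoff_ineq_nn_integral_ge) measurable
  also have "(\<integral>\<^sup>+x. ennreal (exp (s * ((\<Sum>a\<in>A. X a x) / card A))) * indicator (space P) x \<partial>P)
      = (\<integral>\<^sup>+x. ennreal (exp (s * ((\<Sum>a\<in>A. X a x) / card A))) \<partial>P)"
    by (intro nn_integral_cong) simp
  also have "\<dots> \<le> ennreal (exp (s\<^sup>2 * c))"
    using A s X mgf by (intro nn_integral_exp_mean_le) auto
  also have "ennreal (exp (- s * \<epsilon>)) * ennreal (exp (s\<^sup>2 * c)) = ennreal (exp (- s * \<epsilon> + s\<^sup>2 * c))"
    by (simp add: exp_add[symmetric] flip: ennreal_mult)
  also have "- s * \<epsilon> + s\<^sup>2 * c = - \<epsilon>\<^sup>2 / (4 * c)"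
    using \<open>0 < c\<close> by (simp add: s_def power2_eq_square field_simps)
  finally show ?thesis
    by (simp add: emeasure_eq_measure mult_left_mono)
qed

section \<open>The single-layer GCNN and its SGD iterates\<close>

lemma sgd_param_cong:
  assumes "\<forall>i\<in>set is. S i = S' i"
  shows "sgd_param N l \<sigma> g feat \<eta> \<theta>0 S is = sgd_param N l \<sigma> g feat \<eta> \<theta>0 S' is"
  using assms unfolding sgd_param_def by (induction "is" arbitrary: \<theta>0) auto

definition sgd_index_lists :: "nat \<Rightarrow> nat \<Rightarrow> nat list set" where
  "sgd_index_lists m T = {is. set is \<subseteq> {..<m} \<and> length is = T}"

lemma finite_sgd_index_lists: "finite (sgd_index_lists m T)"
  unfolding sgd_index_lists_def by (rule finite_lists_length_eq) simp

lemma card_sgd_index_lists: "card (sgd_index_lists m T) = m ^ T"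
  unfolding sgd_index_lists_def using card_lists_length_eq[of "{..<m}" T] by simp

lemma sgd_index_lists_nonempty:
  assumes "0 < m"
  shows "sgd_index_lists m T \<noteq> {}"
proof -
  have "replicate T 0 \<in> sgd_index_lists m T"
    using assms by (simp add: sgd_index_lists_def set_replicate_conv_if)
  then show ?thesis
    by (metis empty_iff)
qed

lemma sgd_expect_eq_average:
  "sgd_expect m T X = (\<Sum>is\<in>sgd_index_lists m T. X is) / card (sgd_index_lists m T)"
  unfolding card_sgd_index_lists by (simp add: sgd_expect_def sgd_index_lists_def)

locale gcnn_loss =
  fixes N :: nat and g :: filter and feat :: "nat \<Rightarrow> real" and \<sigma> :: "real \<Rightarrow> real"
    and l :: "real \<Rightarrow> real \<Rightarrow> real" and \<alpha>l \<alpha>\<sigma> :: real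
  assumes feat_normalized: "\<forall>x<N. (\<Sum>j\<in>ego_nodes N g x. (feat j)\<^sup>2) = 1"
    and \<sigma>_differentiable: "\<forall>u. \<sigma> differentiable (at u)"
    and abs_deriv_\<sigma>_le: "\<forall>u. \<bar>deriv \<sigma> u\<bar> \<le> \<alpha>\<sigma>"
    and l_differentiable: "\<forall>f y. (\<lambda>f'. l f' y) differentiable (at f)"
    and l_lipschitz: "\<forall>f f' y. \<bar>l f y - l f' y\<bar> \<le> \<alpha>l * \<bar>f - f'\<bar>"
begin

definition spectral_bound :: real where
  "spectral_bound = max 1 (largest_singular_value N g)"

definition lipschitz_const :: real where
  "lipschitz_const = \<alpha>l * \<alpha>\<sigma> * spectral_bound"

lemma \<alpha>l_nonneg: "0 \<le> \<alpha>l"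
  using l_lipschitz[rule_format, of 1 0 0] by simp

lemma \<alpha>\<sigma>_nonneg: "0 \<le> \<alpha>\<sigma>"
  using abs_deriv_\<sigma>_le[rule_format, of 0] by simp

lemma lipschitz_const_nonneg: "0 \<le> lipschitz_const"
  unfolding lipschitz_const_def spectral_bound_def using \<alpha>l_nonneg \<alpha>\<sigma>_nonneg by simp

lemma abs_graph_conv_le:
  assumes "x < N"
  shows "\<bar>graph_conv N g feat x\<bar> \<le> spectral_bound"
proof -
  have "(graph_conv N g feat x)\<^sup>2
      \<le> (\<Sum>j\<in>ego_nodes N g x. (g x j)\<^sup>2) * (\<Sum>j\<in>ego_nodes N g x. (feat j)\<^sup>2)"
    unfolding graph_conv_def by (rule Cauchy_Schwarz_ineq_sum)
  also have "\<dots> = (\<Sum>j\<in>ego_nodes N g x. (g x j)\<^sup>2)"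
    using feat_normalized assms by simp
  also have "\<dots> = (\<Sum>j<N. (g x j)\<^sup>2)"
    using assms by (intro sum.mono_neutral_left) (auto simp: ego_nodes_def)
  finally have "\<bar>graph_conv N g feat x\<bar> \<le> sqrt (\<Sum>j<N. (g x j)\<^sup>2)"
    using real_sqrt_le_mono by fastforce
  also have "\<dots> \<le> largest_singular_value N g"
    using assms by (rule row_norm_le_largest_singular_value)
  finally show ?thesis
    unfolding spectral_bound_def by simp
qed

lemma loss_lipschitz:
  assumes "x < N"
  shows "\<bar>l (gcnn N \<sigma> g feat x \<theta>) y - l (gcnn N \<sigma> g feat x \<theta>') y\<bar>
    \<le> lipschitz_const * \<bar>\<theta> - \<theta>'\<bar>"
proof -
  let ?c = "graph_conv N g feat x"
  have "\<bar>l (gcnn N \<sigma> g feat x \<theta>) y - l (gcnn N \<sigma> g feat x \<theta>') y\<bar>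
      \<le> \<alpha>l * \<bar>\<sigma> (?c * \<theta>) - \<sigma> (?c * \<theta>')\<bar>"
    unfolding gcnn_def using l_lipschitz by blast
  also have "\<dots> \<le> \<alpha>l * (\<alpha>\<sigma> * (\<bar>?c\<bar> * \<bar>\<theta> - \<theta>'\<bar>))"
    using lipschitz_if_abs_deriv_le[of \<sigma> \<alpha>\<sigma> "?c * \<theta>" "?c * \<theta>'"]
      \<sigma>_differentiable abs_deriv_\<sigma>_le \<alpha>l_nonneg
    by (auto intro!: mult_left_mono simp: abs_mult simp flip: right_diff_distrib)
  also have "\<dots> \<le> \<alpha>l * (\<alpha>\<sigma> * (spectral_bound * \<bar>\<theta> - \<theta>'\<bar>))"
    using abs_graph_conv_le[OF assms] \<alpha>l_nonneg \<alpha>\<sigma>_nonneg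
    by (intro mult_left_mono mult_right_mono) auto
  finally show ?thesis
    by (simp add: lipschitz_const_def mult_ac)
qed

lemma loss_differentiable: "(\<lambda>t. l (gcnn N \<sigma> g feat x t) y) differentiable (at \<theta>)"
proof -
  have "((\<lambda>f'. l f' y) \<circ> \<sigma> \<circ> (\<lambda>t. graph_conv N g feat x * t)) differentiable (at \<theta>)"
    using l_differentiable \<sigma>_differentiable
    by (intro differentiable_chain_at) (auto intro!: derivative_intros)
  then show ?thesis
    unfolding gcnn_def by (simp add: o_def)
qed

lemma abs_loss_grad_le:
  assumes "fst z < N"
  shows "\<bar>loss_grad N l \<sigma> g feat z \<theta>\<bar> \<le> lipschitz_const"
  unfolding loss_grad_def using loss_differentiable loss_lipschitz[OF assms]
  by (rule abs_deriv_le_if_lipschitz)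

lemma abs_sgd_param_diff_le:
  assumes "\<forall>i\<in>set is. fst (S i) < N" and "0 \<le> \<eta>"
  shows "\<bar>sgd_param N l \<sigma> g feat \<eta> \<theta>0 S is - \<theta>0\<bar> \<le> \<eta> * length is * lipschitz_const"
  using assms(1)
proof (induction "is" rule: rev_induct)
  case Nil
  then show ?case
    by (simp add: sgd_param_def)
next
  case (snoc i "is")
  let ?\<theta> = "sgd_param N l \<sigma> g feat \<eta> \<theta>0 S is"
  have "sgd_param N l \<sigma> g feat \<eta> \<theta>0 S (is @ [i])
      = ?\<theta> - \<eta> * loss_grad N l \<sigma> g feat (S i) ?\<theta>"
    unfolding sgd_param_def by simp
  moreover have "\<bar>\<eta> * loss_grad N l \<sigma> g feat (S i) ?\<theta>\<bar> \<le> \<eta> * lipschitz_const"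
    using abs_loss_grad_le[of "S i"] snoc.prems assms(2) by (simp add: abs_mult mult_left_mono)
  ultimately show ?case
    using snoc by (simp add: algebra_simps)
qed

end

section \<open>Generalisation gap of SGD on a random sample\<close>

locale gcnn_learning = gcnn_loss +
  fixes M :: real and D :: "(nat \<times> real) measure" and \<eta> \<theta>0 :: real
  assumes l_bounded: "\<forall>f y. 0 \<le> l f y \<and> l f y \<le> M"
    and l_measurable: "(\<lambda>p. l (fst p) (snd p)) \<in> borel_measurable borel"
    and prob_space_D: "prob_space D"
    and sets_D: "sets D = sets (count_space {..<N} \<Otimes>\<^sub>M (borel :: real measure))"
    and \<eta>_pos: "0 < \<eta>"
begin

abbreviation loss :: "real \<Rightarrow> nat \<times> real \<Rightarrow> real" where
  "loss \<theta> z \<equiv> l (gcnn N \<sigma> g feat (fst z) \<theta>) (snd z)"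

abbreviation R :: "real \<Rightarrow> real" where
  "R \<equiv> risk N l \<sigma> g feat D"

abbreviation sgd :: "(nat \<Rightarrow> nat \<times> real) \<Rightarrow> nat list \<Rightarrow> real" where
  "sgd S is \<equiv> sgd_param N l \<sigma> g feat \<eta> \<theta>0 S is"

abbreviation samples :: "nat \<Rightarrow> (nat \<Rightarrow> nat \<times> real) measure" where
  "samples m \<equiv> PiM {..<m} (\<lambda>_. D)"

lemma space_D: "space D = {..<N} \<times> UNIV"
  using sets_eq_imp_space_eq[OF sets_D] by (simp add: space_pair_measure)

lemma measurable_fst_D: "fst \<in> measurable D (count_space {..<N})"
  by (subst measurable_cong_sets[OF sets_D refl]) (rule measurable_fst)

lemma borel_measurable_snd_D: "snd \<in> borel_measurable D"
  by (subst measurable_cong_sets[OF sets_D refl]) (rule measurable_snd)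

lemma borel_measurable_loss_comp:
  assumes X: "X \<in> measurable M' (count_space {..<N})"
    and [measurable]: "Y \<in> borel_measurable M'" "\<Theta> \<in> borel_measurable M'"
  shows "(\<lambda>\<omega>. l (gcnn N \<sigma> g feat (X \<omega>) (\<Theta> \<omega>)) (Y \<omega>)) \<in> borel_measurable M'"
proof (rule measurable_compose_countable'
    [where f = "\<lambda>n \<omega>. l (gcnn N \<sigma> g feat n (\<Theta> \<omega>)) (Y \<omega>)", OF _ X])
  have [measurable]: "\<sigma> \<in> borel_measurable borel"
    using \<sigma>_differentiable
    by (intro borel_measurable_continuous_onI)
       (simp add: continuous_on_eq_continuous_at differentiable_imp_continuous_within)
  fix n
  have pair: "(\<lambda>\<omega>. (\<sigma> (graph_conv N g feat n * \<Theta> \<omega>), Y \<omega>))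
      \<in> measurable M' (borel \<Otimes>\<^sub>M borel)"
    by measurable
  have "(\<lambda>p. l (fst p) (snd p)) \<in> borel_measurable (borel \<Otimes>\<^sub>M borel)"
    using l_measurable by (simp add: borel_prod)
  from measurable_compose[OF pair this]
  show "(\<lambda>\<omega>. l (gcnn N \<sigma> g feat n (\<Theta> \<omega>)) (Y \<omega>)) \<in> borel_measurable M'"
    unfolding gcnn_def by simp
qed simp

lemma borel_measurable_loss_grad_comp:
  assumes X: "X \<in> measurable M' (count_space {..<N})"
    and Y: "Y \<in> borel_measurable M'" and \<Theta>: "\<Theta> \<in> borel_measurable M'"
  shows "(\<lambda>\<omega>. loss_grad N l \<sigma> g feat (X \<omega>, Y \<omega>) (\<Theta> \<omega>)) \<in> borel_measurable M'"
proof (rule measurable_compose_countable'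
    [where f = "\<lambda>n \<omega>. loss_grad N l \<sigma> g feat (n, Y \<omega>) (\<Theta> \<omega>)", OF _ X])
  fix n assume "n \<in> {..<N}"
  then have "(\<lambda>\<omega>. l (gcnn N \<sigma> g feat n (\<Theta> \<omega> + h)) (Y \<omega>)) \<in> borel_measurable M'" for h
    using Y \<Theta> by (intro borel_measurable_loss_comp) auto
  then show "(\<lambda>\<omega>. loss_grad N l \<sigma> g feat (n, Y \<omega>) (\<Theta> \<omega>)) \<in> borel_measurable M'"
    unfolding loss_grad_def fst_conv snd_conv
    using loss_differentiable by (rule borel_measurable_deriv[rotated])
qed simp

lemma borel_measurable_loss [measurable]: "loss \<theta> \<in> borel_measurable D"
  using measurable_fst_D borel_measurable_snd_D by (rule borel_measurable_loss_comp) simp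

lemma loss_bounded: "0 \<le> loss \<theta> z" "loss \<theta> z \<le> M"
  using l_bounded by auto

lemma integrable_loss: "integrable D (loss \<theta>)"
proof -
  interpret prob_space D
    by (rule prob_space_D)
  show ?thesis
    by (rule integrable_const_bound[where B = M]) (auto simp: loss_bounded)
qed

lemma risk_lipschitz: "\<bar>R \<theta> - R \<theta>'\<bar> \<le> lipschitz_const * \<bar>\<theta> - \<theta>'\<bar>"
proof -
  interpret prob_space D
    by (rule prob_space_D)
  have "R \<theta> - R \<theta>' = (\<integral>z. loss \<theta> z - loss \<theta>' z \<partial>D)"
    unfolding risk_def
    by (rule Bochner_Integration.integral_diff[symmetric]) (rule integrable_loss)+
  then have "\<bar>R \<theta> - R \<theta>'\<bar> \<le> (\<integral>z. \<bar>loss \<theta> z - loss \<theta>' z\<bar> \<partial>D)"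
    using integral_abs_bound[of D "\<lambda>z. loss \<theta> z - loss \<theta>' z"] by simp
  also have "\<dots> \<le> (\<integral>z. lipschitz_const * \<bar>\<theta> - \<theta>'\<bar> \<partial>D)"
  proof (rule integral_mono)
    show "integrable D (\<lambda>z. \<bar>loss \<theta> z - loss \<theta>' z\<bar>)"
      using integrable_loss by (intro integrable_abs Bochner_Integration.integrable_diff)
    fix z assume "z \<in> space D"
    then show "\<bar>loss \<theta> z - loss \<theta>' z\<bar> \<le> lipschitz_const * \<bar>\<theta> - \<theta>'\<bar>"
      using loss_lipschitz by (auto simp: space_D)
  qed simp
  finally show ?thesis
    by (simp add: prob_space)
qed

lemma borel_measurable_risk [measurable]: "R \<in> borel_measurable borel"
proof (rule borel_measurable_continuous_onI)
  have "lipschitz_const-lipschitz_on UNIV R"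
    by (rule lipschitz_onI) (auto simp: dist_real_def risk_lipschitz lipschitz_const_nonneg)
  then show "continuous_on UNIV R"
    by (rule lipschitz_on_continuous_on)
qed

lemma measurable_sample_fst:
  assumes "k < m"
  shows "(\<lambda>S. fst (S k)) \<in> measurable (samples m) (count_space {..<N})"
  using measurable_compose[OF measurable_component_singleton[of k "{..<m}" "\<lambda>_. D"]
      measurable_fst_D] assms
  by simp

lemma borel_measurable_sample_snd:
  assumes "k < m"
  shows "(\<lambda>S. snd (S k)) \<in> borel_measurable (samples m)"
  using measurable_compose[OF measurable_component_singleton[of k "{..<m}" "\<lambda>_. D"]
      borel_measurable_snd_D] assms
  by simp

lemma borel_measurable_sample_loss:
  assumes "k < m" and "\<Theta> \<in> borel_measurable (samples m)"
  shows "(\<lambda>S. loss (\<Theta> S) (S k)) \<in> borel_measurable (samples m)"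
  using measurable_sample_fst[OF assms(1)] borel_measurable_sample_snd[OF assms(1)] assms(2)
  by (rule borel_measurable_loss_comp)

lemma borel_measurable_sgd:
  assumes "set is \<subseteq> {..<m}"
  shows "(\<lambda>S. sgd S is) \<in> borel_measurable (samples m)"
  using assms
proof (induction "is" rule: rev_induct)
  case Nil
  then show ?case
    by (simp add: sgd_param_def)
next
  case (snoc i "is")
  then have i: "i < m" and "is": "set is \<subseteq> {..<m}"
    by auto
  let ?grad = "\<lambda>S. loss_grad N l \<sigma> g feat (fst (S i), snd (S i)) (sgd S is)"
  have "sgd S (is @ [i]) = sgd S is - \<eta> * ?grad S" for S
    unfolding sgd_param_def by simp
  moreover have "?grad \<in> borel_measurable (samples m)"
    using measurable_sample_fst[OF i] borel_measurable_sample_snd[OF i] snoc.IH[OF "is"]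
    by (rule borel_measurable_loss_grad_comp)
  ultimately show ?case
    using snoc.IH[OF "is"] by simp
qed

lemma mgf_centered_loss_le:
  assumes "0 < r"
  shows "(\<integral>\<^sup>+z. ennreal (exp (r * (R \<theta> - loss \<theta> z))) \<partial>D) \<le> ennreal (exp (r\<^sup>2 * M\<^sup>2 / 8))"
proof -
  interpret prob_space D
    by (rule prob_space_D)
  interpret interval_bounded_random_variable D "\<lambda>z. - loss \<theta> z" "- M" 0
    by unfold_locales (auto simp: loss_bounded)
  have "expectation (\<lambda>z. - loss \<theta> z) = - R \<theta>"
    by (simp add: risk_def)
  with Hoeffdings_lemma_nn_integral[OF assms] show ?thesis
    by simp
qed

text \<open>The parameter \<open>\<theta>\<^sub>S\<close> is replaced by \<open>\<theta>0\<close> on the samples visited by SGD, so that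
  each summand is evaluated at a parameter independent of its sample.\<close>

definition decoupled_gap :: "nat \<Rightarrow> nat list \<Rightarrow> (nat \<Rightarrow> nat \<times> real) \<Rightarrow> real" where
  "decoupled_gap m is S = (\<Sum>k\<in>set is. R \<theta>0 - loss \<theta>0 (S k))
     + (\<Sum>k\<in>{..<m} - set is. R (sgd S is) - loss (sgd S is) (S k))"

lemma borel_measurable_decoupled_gap:
  assumes "set is \<subseteq> {..<m}"
  shows "decoupled_gap m is \<in> borel_measurable (samples m)"
proof -
  have [measurable]: "(\<lambda>S. sgd S is) \<in> borel_measurable (samples m)"
    using assms by (rule borel_measurable_sgd)
  have [measurable]: "(\<lambda>S. loss \<theta>0 (S k)) \<in> borel_measurable (samples m)"
    if "k \<in> set is" for k
    using assms that by (intro borel_measurable_sample_loss) auto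
  have [measurable]: "(\<lambda>S. loss (sgd S is) (S k)) \<in> borel_measurable (samples m)"
    if "k \<in> {..<m} - set is" for k
    using that by (intro borel_measurable_sample_loss) auto
  show ?thesis
    unfolding decoupled_gap_def[abs_def] by measurable
qed

lemma mgf_decoupled_gap_le:
  assumes "is": "set is \<subseteq> {..<m}" and r: "0 < r"
  shows "(\<integral>\<^sup>+S. ennreal (exp (r * decoupled_gap m is S)) \<partial>samples m)
    \<le> ennreal (exp (r\<^sup>2 * M\<^sup>2 / 8)) ^ m"
proof -
  define I where "I = set is"
  define J where "J = {..<m} - set is"
  have IJ: "finite I" "finite J" "I \<inter> J = {}" and m1: "I \<union> J = {..<m}"
    using "is" by (auto simp: I_def J_def)
  have m2: "card I + card J = m"
    using card_Un_disjoint[OF IJ] m1 by simp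
  define u where "u z = r * (R \<theta>0 - loss \<theta>0 z)" for z
  define v where "v x = (\<lambda>z. r * (R (sgd x is) - loss (sgd x is) z))" for x
  have gap: "r * decoupled_gap m is S = (\<Sum>k\<in>I. u (S k)) + (\<Sum>k\<in>J. v (restrict S I) (S k))" for S
  proof -
    have "sgd (restrict S I) is = sgd S is"
      by (rule sgd_param_cong) (simp add: I_def)
    then show ?thesis
      by (simp add: decoupled_gap_def u_def v_def I_def J_def distrib_left sum_distrib_left)
  qed
  have "(\<integral>\<^sup>+S. ennreal (exp ((\<Sum>k\<in>I. u (S k)) + (\<Sum>k\<in>J. v (restrict S I) (S k))))
      \<partial>PiM (I \<union> J) (\<lambda>_. D)) \<le> ennreal (exp (r\<^sup>2 * M\<^sup>2 / 8)) ^ (card I + card J)"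
  proof (rule nn_integral_exp_sum_adapted_le[OF prob_space_D IJ])
    show "u \<in> borel_measurable D" "\<And>x. v x \<in> borel_measurable D"
      unfolding u_def v_def by measurable
    show "(\<integral>\<^sup>+z. ennreal (exp (u z)) \<partial>D) \<le> ennreal (exp (r\<^sup>2 * M\<^sup>2 / 8))"
      "\<And>x. (\<integral>\<^sup>+z. ennreal (exp (v x z)) \<partial>D) \<le> ennreal (exp (r\<^sup>2 * M\<^sup>2 / 8))"
      unfolding u_def v_def using r by (simp_all add: mgf_centered_loss_le)
    show "(\<lambda>S. (\<Sum>k\<in>I. u (S k)) + (\<Sum>k\<in>J. v (restrict S I) (S k)))
        \<in> borel_measurable (PiM (I \<union> J) (\<lambda>_. D))"
      unfolding gap[symmetric] m1 using borel_measurable_decoupled_gap[OF "is"] by measurable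
  qed
  then show ?thesis
    unfolding gap[symmetric] m1 m2 .
qed

lemma fst_sample_less:
  assumes "S \<in> space (samples m)" and "k < m"
  shows "fst (S k) < N"
proof -
  have "S k \<in> {..<N} \<times> UNIV"
    using assms space_D by (auto simp: space_PiM PiE_iff)
  then show ?thesis
    by auto
qed

lemma gap_at_visited_sample_le:
  assumes S: "S \<in> space (samples m)" and "is": "set is \<subseteq> {..<m}" "length is = T"
    and k: "k \<in> set is"
  shows "R (sgd S is) - loss (sgd S is) (S k)
    \<le> (R \<theta>0 - loss \<theta>0 (S k)) + 2 * (\<eta> * T * lipschitz_const\<^sup>2)"
proof -
  define \<theta> where "\<theta> = sgd S is"
  define K where "K = lipschitz_const"
  have "\<bar>\<theta> - \<theta>0\<bar> \<le> \<eta> * T * K"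
    unfolding \<theta>_def K_def
    using abs_sgd_param_diff_le[of "is" S \<eta> \<theta>0] fst_sample_less[OF S] "is" \<eta>_pos
    by auto
  then have "K * \<bar>\<theta> - \<theta>0\<bar> \<le> K * (\<eta> * T * K)"
    using lipschitz_const_nonneg by (intro mult_left_mono) (simp_all add: K_def)
  moreover have "fst (S k) < N"
    using fst_sample_less[OF S] k "is"(1) by auto
  then have "loss \<theta>0 (S k) - loss \<theta> (S k) \<le> K * \<bar>\<theta> - \<theta>0\<bar>"
    using loss_lipschitz[of "fst (S k)" \<theta>0 "snd (S k)" \<theta>] by (simp add: K_def abs_minus_commute)
  moreover have "R \<theta> - R \<theta>0 \<le> K * \<bar>\<theta> - \<theta>0\<bar>"
    using risk_lipschitz[of \<theta> \<theta>0] by (simp add: K_def)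
  moreover have "K * (\<eta> * T * K) = \<eta> * T * K\<^sup>2"
    by (simp add: power2_eq_square mult_ac)
  ultimately show ?thesis
    unfolding \<theta>_def K_def by linarith
qed

lemma gap_le_decoupled_gap:
  assumes S: "S \<in> space (samples m)" and "is": "set is \<subseteq> {..<m}" "length is = T"
    and m: "1 \<le> m"
  shows "R (sgd S is) - emp_risk N l \<sigma> g feat m S (sgd S is)
    \<le> (decoupled_gap m is S + 2 * \<eta> * (real T)\<^sup>2 * lipschitz_const\<^sup>2) / m"
proof -
  define \<theta> where "\<theta> = sgd S is"
  define I where "I = set is"
  define c where "c = 2 * (\<eta> * T * lipschitz_const\<^sup>2)"
  have "card I \<le> T"
    unfolding I_def using "is"(2) card_length by metis
  have "(\<Sum>k\<in>I. R \<theta> - loss \<theta> (S k)) \<le> (\<Sum>k\<in>I. (R \<theta>0 - loss \<theta>0 (S k)) + c)"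
    using gap_at_visited_sample_le[OF S "is"] by (intro sum_mono) (simp add: \<theta>_def I_def c_def)
  also have "\<dots> = (\<Sum>k\<in>I. R \<theta>0 - loss \<theta>0 (S k)) + card I * c"
    by (simp add: sum.distrib)
  also have "\<dots> \<le> (\<Sum>k\<in>I. R \<theta>0 - loss \<theta>0 (S k)) + T * c"
    using \<open>card I \<le> T\<close> \<eta>_pos by (intro add_left_mono mult_right_mono) (auto simp: c_def)
  finally have "(\<Sum>k\<in>I. R \<theta> - loss \<theta> (S k))
      \<le> (\<Sum>k\<in>I. R \<theta>0 - loss \<theta>0 (S k)) + 2 * \<eta> * (real T)\<^sup>2 * lipschitz_const\<^sup>2"
    by (simp add: c_def power2_eq_square mult_ac)
  moreover have "(\<Sum>k<m. R \<theta> - loss \<theta> (S k))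
      = (\<Sum>k\<in>{..<m} - I. R \<theta> - loss \<theta> (S k)) + (\<Sum>k\<in>I. R \<theta> - loss \<theta> (S k))"
    using "is"(1) unfolding I_def by (intro sum.subset_diff) auto
  ultimately have "(\<Sum>k<m. R \<theta> - loss \<theta> (S k))
      \<le> decoupled_gap m is S + 2 * \<eta> * (real T)\<^sup>2 * lipschitz_const\<^sup>2"
    unfolding decoupled_gap_def \<theta>_def I_def by linarith
  moreover have "R \<theta> - emp_risk N l \<sigma> g feat m S \<theta> = (\<Sum>k<m. R \<theta> - loss \<theta> (S k)) / m"
    using m by (simp add: emp_risk_def sum_subtractf field_simps)
  ultimately show ?thesis
    unfolding \<theta>_def by (simp add: divide_right_mono)
qed

lemma sgd_expect_gap_le:
  assumes "S \<in> space (samples m)" and "1 \<le> m"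
  shows "sgd_expect m T (\<lambda>is. R (sgd S is) - emp_risk N l \<sigma> g feat m S (sgd S is))
    \<le> sgd_expect m T (\<lambda>is. decoupled_gap m is S / m) + 2 * \<eta> * (real T)\<^sup>2 * lipschitz_const\<^sup>2 / m"
proof -
  define L where "L = sgd_index_lists m T"
  define c where "c = 2 * \<eta> * (real T)\<^sup>2 * lipschitz_const\<^sup>2 / m"
  have "0 < card L"
    using assms(2) finite_sgd_index_lists sgd_index_lists_nonempty
    by (simp add: L_def card_gt_0_iff)
  have "(\<Sum>is\<in>L. R (sgd S is) - emp_risk N l \<sigma> g feat m S (sgd S is))
      \<le> (\<Sum>is\<in>L. decoupled_gap m is S / m + c)"
    using gap_le_decoupled_gap[OF assms(1) _ _ assms(2)]
    by (intro sum_mono) (simp add: L_def sgd_index_lists_def c_def add_divide_distrib)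
  also have "\<dots> = (\<Sum>is\<in>L. decoupled_gap m is S / m) + card L * c"
    by (simp add: sum.distrib)
  finally have "(\<Sum>is\<in>L. R (sgd S is) - emp_risk N l \<sigma> g feat m S (sgd S is)) / card L
      \<le> ((\<Sum>is\<in>L. decoupled_gap m is S / m) + card L * c) / card L"
    by (rule divide_right_mono) simp
  also have "\<dots> = (\<Sum>is\<in>L. decoupled_gap m is S / m) / card L + c"
    using \<open>0 < card L\<close> by (simp add: add_divide_distrib)
  finally show ?thesis
    unfolding sgd_expect_eq_average L_def c_def .
qed

lemma borel_measurable_emp_risk_sgd:
  assumes "set is \<subseteq> {..<m}"
  shows "(\<lambda>S. emp_risk N l \<sigma> g feat m S (sgd S is)) \<in> borel_measurable (samples m)"
  unfolding emp_risk_def using assms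
  by (intro borel_measurable_divide borel_measurable_sum borel_measurable_sample_loss
      borel_measurable_sgd borel_measurable_const) auto

lemma borel_measurable_sgd_expect_gap:
  "(\<lambda>S. sgd_expect m T (\<lambda>is. R (sgd S is) - emp_risk N l \<sigma> g feat m S (sgd S is)))
    \<in> borel_measurable (samples m)"
  unfolding sgd_expect_eq_average
  by (intro borel_measurable_divide borel_measurable_sum borel_measurable_diff
      borel_measurable_const borel_measurable_emp_risk_sgd
      measurable_compose[OF borel_measurable_sgd borel_measurable_risk])
     (auto simp: sgd_index_lists_def)

lemma borel_measurable_sgd_expect_decoupled_gap:
  "(\<lambda>S. sgd_expect m T (\<lambda>is. decoupled_gap m is S / m)) \<in> borel_measurable (samples m)"
  unfolding sgd_expect_eq_average
  by (intro borel_measurable_divide borel_measurable_sum borel_measurable_const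
      borel_measurable_decoupled_gap) (simp add: sgd_index_lists_def)

lemma mgf_decoupled_gap_div_le:
  assumes "set is \<subseteq> {..<m}" and m: "1 \<le> m" and "0 < r"
  shows "(\<integral>\<^sup>+S. ennreal (exp (r * (decoupled_gap m is S / m))) \<partial>samples m)
    \<le> ennreal (exp (r\<^sup>2 * (M\<^sup>2 / (8 * real m))))"
proof -
  have "(\<integral>\<^sup>+S. ennreal (exp (r * (decoupled_gap m is S / m))) \<partial>samples m)
      = (\<integral>\<^sup>+S. ennreal (exp ((r / m) * decoupled_gap m is S)) \<partial>samples m)"
    by simp
  also have "\<dots> \<le> ennreal (exp ((r / m)\<^sup>2 * M\<^sup>2 / 8)) ^ m"
    using assms by (intro mgf_decoupled_gap_le) simp_all
  also have "\<dots> = ennreal (exp (r\<^sup>2 * (M\<^sup>2 / (8 * real m))))"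
    using m by (simp add: ennreal_power power_divide power2_eq_square field_simps
        flip: exp_of_nat_mult)
  finally show ?thesis .
qed

lemma prob_sgd_expect_decoupled_gap_ge_le:
  assumes m: "1 \<le> m" and "0 < M" and \<delta>: "0 < \<delta>" "\<delta> < 1"
  shows "measure (samples m) {S \<in> space (samples m).
      M * sqrt (ln (1 / \<delta>) / (2 * real m)) \<le> sgd_expect m T (\<lambda>is. decoupled_gap m is S / m)}
    \<le> \<delta>"
proof -
  define \<epsilon> where "\<epsilon> = M * sqrt (ln (1 / \<delta>) / (2 * real m))"
  define c where "c = M\<^sup>2 / (8 * real m)"
  have L: "finite (sgd_index_lists m T)" "sgd_index_lists m T \<noteq> {}"
    using m by (simp_all add: finite_sgd_index_lists sgd_index_lists_nonempty)
  have "0 < ln (1 / \<delta>)"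
    using \<delta> by simp
  then have "0 < \<epsilon>" "0 < c" and \<epsilon>_sq: "\<epsilon>\<^sup>2 = M\<^sup>2 * ln (1 / \<delta>) / (2 * real m)"
    using m \<open>0 < M\<close> by (simp_all add: \<epsilon>_def c_def power_mult_distrib)
  have "measure (samples m)
      {S \<in> space (samples m). \<epsilon> \<le> sgd_expect m T (\<lambda>is. decoupled_gap m is S / m)}
    \<le> exp (- \<epsilon>\<^sup>2 / (4 * c))"
    unfolding sgd_expect_eq_average
  proof (rule prob_average_ge_le[OF _ L \<open>0 < c\<close> \<open>0 < \<epsilon>\<close>])
    show "prob_space (samples m)"
      by (rule prob_space_PiM) (simp add: prob_space_D)
    fix "is" assume "is \<in> sgd_index_lists m T"
    then show "(\<lambda>S. decoupled_gap m is S / m) \<in> borel_measurable (samples m)"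
      by (intro borel_measurable_divide borel_measurable_decoupled_gap borel_measurable_const)
         (simp add: sgd_index_lists_def)
  next
    fix "is" and r :: real
    assume "is \<in> sgd_index_lists m T" and "0 < r"
    then show "(\<integral>\<^sup>+S. ennreal (exp (r * (decoupled_gap m is S / m))) \<partial>samples m)
        \<le> ennreal (exp (r\<^sup>2 * c))"
      unfolding c_def using m
      by (intro mgf_decoupled_gap_div_le) (simp_all add: sgd_index_lists_def)
  qed
  also have "- \<epsilon>\<^sup>2 / (4 * c) = - ln (1 / \<delta>)"
    using m \<open>0 < M\<close> by (simp add: \<epsilon>_sq c_def field_simps)
  also have "exp (- ln (1 / \<delta>)) = \<delta>"
    using \<delta> by (simp add: ln_div)
  finally show ?thesis
    unfolding \<epsilon>_def .
qed

lemma prob_sgd_expect_decoupled_gap_gt_le: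
  assumes m: "1 \<le> m" and \<delta>: "0 < \<delta>" "\<delta> < 1"
  shows "measure (samples m) {S \<in> space (samples m).
      M * sqrt (ln (1 / \<delta>) / (2 * real m)) < sgd_expect m T (\<lambda>is. decoupled_gap m is S / m)}
    \<le> \<delta>"
proof (cases "M = 0")
  case True
  then have "loss \<theta> z = 0" for \<theta> z
    using loss_bounded[where \<theta> = \<theta> and z = z] by simp
  then have "sgd_expect m T (\<lambda>is. decoupled_gap m is S / m) = 0" for S
    by (simp add: decoupled_gap_def risk_def sgd_expect_def)
  then show ?thesis
    using True \<delta> by simp
next
  case False
  interpret P: prob_space "samples m"
    by (rule prob_space_PiM) (simp add: prob_space_D)
  have [measurable]:
    "(\<lambda>S. sgd_expect m T (\<lambda>is. decoupled_gap m is S / m)) \<in> borel_measurable (samples m)"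
    by (rule borel_measurable_sgd_expect_decoupled_gap)
  have "0 \<le> M"
    using l_bounded by (meson order_trans)
  with False have "0 < M"
    by simp
  have "measure (samples m) {S \<in> space (samples m).
      M * sqrt (ln (1 / \<delta>) / (2 * real m)) < sgd_expect m T (\<lambda>is. decoupled_gap m is S / m)}
    \<le> measure (samples m) {S \<in> space (samples m).
      M * sqrt (ln (1 / \<delta>) / (2 * real m)) \<le> sgd_expect m T (\<lambda>is. decoupled_gap m is S / m)}"
    by (intro P.finite_measure_mono) (auto, measurable)
  also have "\<dots> \<le> \<delta>"
    using \<open>0 < M\<close> by (rule prob_sgd_expect_decoupled_gap_ge_le[OF m _ \<delta>])
  finally show ?thesis .
qed

lemma T_sq_lipschitz_const_sq_le:
  "(real T)\<^sup>2 * lipschitz_const\<^sup>2 \<le> (real T)\<^sup>2 * (\<alpha>l * \<alpha>\<sigma>)\<^sup>2 * spectral_bound ^ (2 * T)"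
proof (cases "T = 0")
  case False
  have "spectral_bound\<^sup>2 \<le> spectral_bound ^ (2 * T)"
    using False by (intro power_increasing) (auto simp: spectral_bound_def)
  from mult_left_mono[OF this, of "(real T)\<^sup>2 * (\<alpha>l * \<alpha>\<sigma>)\<^sup>2"] show ?thesis
    unfolding lipschitz_const_def by (simp add: power_mult_distrib mult_ac)
qed simp

lemma generalization_bound:
  assumes m: "1 \<le> m" and \<delta>: "0 < \<delta>" "\<delta> < 1"
  shows "measure (samples m) {S \<in> space (samples m).
      sgd_expect m T (\<lambda>is. R (sgd S is) - emp_risk N l \<sigma> g feat m S (sgd S is))
      \<le> (1 / real m) * (2 * \<eta> * (real T)\<^sup>2 * (\<alpha>l * \<alpha>\<sigma>)\<^sup>2 * spectral_bound ^ (2 * T))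
        + M * sqrt (ln (1 / \<delta>) / (2 * real m))} \<ge> 1 - \<delta>"
proof -
  interpret P: prob_space "samples m"
    by (rule prob_space_PiM) (simp add: prob_space_D)
  define gap where
    "gap S = sgd_expect m T (\<lambda>is. R (sgd S is) - emp_risk N l \<sigma> g feat m S (sgd S is))" for S
  define W where "W S = sgd_expect m T (\<lambda>is. decoupled_gap m is S / m)" for S
  define B where
    "B = (1 / real m) * (2 * \<eta> * (real T)\<^sup>2 * (\<alpha>l * \<alpha>\<sigma>)\<^sup>2 * spectral_bound ^ (2 * T))"
  define \<epsilon> where "\<epsilon> = M * sqrt (ln (1 / \<delta>) / (2 * real m))"
  have "2 * \<eta> * (real T)\<^sup>2 * lipschitz_const\<^sup>2 / m \<le> B"
    using T_sq_lipschitz_const_sq_le \<eta>_pos unfolding B_def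
    by (simp add: divide_right_mono mult.assoc)
  then have "gap S \<le> W S + B" if "S \<in> space (samples m)" for S
    using sgd_expect_gap_le[OF that m, where T = T] unfolding gap_def W_def by linarith
  then have "space (samples m) - {S \<in> space (samples m). \<epsilon> < W S}
      \<subseteq> {S \<in> space (samples m). gap S \<le> B + \<epsilon>}"
    by fastforce
  moreover have [measurable]:
    "gap \<in> borel_measurable (samples m)" "W \<in> borel_measurable (samples m)"
    unfolding gap_def[abs_def] W_def[abs_def]
    by (rule borel_measurable_sgd_expect_gap borel_measurable_sgd_expect_decoupled_gap)+
  ultimately have "P.prob (space (samples m) - {S \<in> space (samples m). \<epsilon> < W S})
      \<le> P.prob {S \<in> space (samples m). gap S \<le> B + \<epsilon>}"
    by (intro P.finite_measure_mono) measurable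
  moreover have "P.prob {S \<in> space (samples m). \<epsilon> < W S} \<le> \<delta>"
    using prob_sgd_expect_decoupled_gap_gt_le[OF m \<delta>] unfolding W_def \<epsilon>_def .
  ultimately show ?thesis
    unfolding gap_def B_def \<epsilon>_def by (simp add: P.prob_compl)
qed

end

theorem theorem1:
  fixes \<eta> \<alpha>l \<alpha>\<sigma> \<nu>l \<nu>\<sigma> :: real and T :: nat
  assumes "\<eta> > 0"
  shows "\<exists>C1 C2 :: real. \<forall>(N :: nat) (g :: filter) (feat :: nat \<Rightarrow> real)
      (\<sigma> :: real \<Rightarrow> real) (l :: real \<Rightarrow> real \<Rightarrow> real) (M :: real)
      (D :: (nat \<times> real) measure) (m :: nat) (\<theta>0 :: real) (\<delta> :: real).
    (\<forall>x<N. (\<Sum>j\<in>ego_nodes N g x. (feat j)\<^sup>2) = 1) \<longrightarrow>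
    (\<forall>u. \<sigma> differentiable (at u)) \<longrightarrow>
    (\<forall>u. \<bar>deriv \<sigma> u\<bar> \<le> \<alpha>\<sigma>) \<longrightarrow>
    (\<forall>u v. \<bar>deriv \<sigma> u - deriv \<sigma> v\<bar> \<le> \<nu>\<sigma> * \<bar>u - v\<bar>) \<longrightarrow>
    (\<forall>f y. (\<lambda>f'. l f' y) differentiable (at f)) \<longrightarrow>
    (\<forall>f f' y. \<bar>l f y - l f' y\<bar> \<le> \<alpha>l * \<bar>f - f'\<bar>) \<longrightarrow>
    (\<forall>x<N. \<forall>y \<theta> \<theta>'.
       \<bar>deriv (\<lambda>t. l (gcnn N \<sigma> g feat x t) y) \<theta> - deriv (\<lambda>t. l (gcnn N \<sigma> g feat x t) y) \<theta>'\<bar>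
         \<le> \<nu>l * \<bar>deriv (\<lambda>t. gcnn N \<sigma> g feat x t) \<theta> - deriv (\<lambda>t. gcnn N \<sigma> g feat x t) \<theta>'\<bar>) \<longrightarrow>
    (\<forall>f y. 0 \<le> l f y \<and> l f y \<le> M) \<longrightarrow>
    (\<lambda>p. l (fst p) (snd p)) \<in> borel_measurable borel \<longrightarrow>
    prob_space D \<longrightarrow>
    sets D = sets (count_space {..<N} \<Otimes>\<^sub>M (borel :: real measure)) \<longrightarrow>
    1 \<le> m \<longrightarrow> m \<le> N \<longrightarrow>
    0 < \<delta> \<longrightarrow> \<delta> < 1 \<longrightarrow>
    measure (PiM {..<m} (\<lambda>_. D))
      {S \<in> space (PiM {..<m} (\<lambda>_. D)).
         sgd_expect m T (\<lambda>is.
            risk N l \<sigma> g feat D (sgd_param N l \<sigma> g feat \<eta> \<theta>0 S is)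
            - emp_risk N l \<sigma> g feat m S (sgd_param N l \<sigma> g feat \<eta> \<theta>0 S is))
         \<le> (1 / real m) * (C1 * (max 1 (largest_singular_value N g)) ^ (2 * T))
           + (C2 * (max 1 (largest_singular_value N g)) ^ (2 * T) + M)
             * sqrt (ln (1 / \<delta>) / (2 * real m))}
      \<ge> 1 - \<delta>"
  (* C2 = 0 because Hoeffding's lemma only sees the range [0, M] of the loss. *)
  apply (rule exI[of _ "2 * \<eta> * (real T)\<^sup>2 * (\<alpha>l * \<alpha>\<sigma>)\<^sup>2"], rule exI[of _ 0], intro allI impI)
  subgoal premises hyps for N g feat \<sigma> l M D m \<theta>0 \<delta>
  proof -
    interpret gcnn_learning N g feat \<sigma> l \<alpha>l \<alpha>\<sigma> M D \<eta> \<theta>0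
      using hyps assms
      by (intro gcnn_learning.intro gcnn_loss.intro gcnn_learning_axioms.intro) simp_all
    from generalization_bound[of m \<delta>] hyps show ?thesis
      by (simp add: spectral_bound_def)
  qed
  done

end
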